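(* Let $N=\{1,\dots,n\}$ and, for each $i\in N$, let $\mathcal{X}_i\subset\mathbb{R}^d$ be nonempty, closed and bounded, with $\tilde{\mathcal{X}}_i=\operatorname{conv}(\mathcal{X}_i)$. Let $A_j$ ($j\in N$) be real $q\times d$ matrices, let $\Omega\subset\mathbb{R}^q$ be a neighborhood of $\{\frac1n\sum_{j\in N}A_jy_j : y_j\in\tilde{\mathcal{X}}_j\ \forall j\}$, and let $\theta_i:\mathcal{X}_i\times\Omega\to\mathbb{R}$ satisfy: (1) for every $i\in N$ and $y\in\Omega$, $x_i\mapsto\theta_i(x_i,y)$ is lower semicontinuous on $\mathcal{X}_i$; (2) there exist constants $H>0,\gamma>0$ such that $|\theta_i(x_i,y')-\theta_i(x_i,y)|\le H\|y'-y\|^\gamma$ for all $i\in N$, $x_i\in\mathcal{X}_i$, $y,y'\in\Omega$. Then the convexified game $\tilde\Gamma$ (defined in the context) admits a pure Nash equilibrium.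
   Context: Notation: $\tilde{\mathcal{X}}=\prod_{i\in N}\tilde{\mathcal{X}}_i$, $\tilde{\mathcal{X}}_{-i}=\prod_{j\ne i}\tilde{\mathcal{X}}_j$. The nonconvex game $\Gamma$ has players $N$, action sets $\mathcal{X}_i$ and costs $f_i(x_i,x_{-i})=\theta_i\big(x_i,\frac1n\sum_{j\in N}A_jx_j\big)$ for $x_i\in\mathcal{X}_i$, $x_{-i}\in\tilde{\mathcal{X}}_{-i}$. Let $\mathcal{S}_d=\{\alpha\in\mathbb{R}^{d+1}:\alpha^k\ge0,\ \sum_k\alpha^k=1\}$. The convexified game $\tilde\Gamma$ has players $N$, action sets $\tilde{\mathcal{X}}_i$ and costs, for $x\in\tilde{\mathcal{X}}$, $\tilde f_i(x_i,x_{-i})=\inf\{\sum_{k=1}^{d+1}\alpha^kf_i(z^k,x_{-i}) : \alpha\in\mathcal{S}_d,\ z^k\in\mathcal{X}_i,\ x_i=\sum_{k=1}^{d+1}\alpha^kz^k\}$. A pure Nash equilibrium of $\tilde\Gamma$ is $x\in\tilde{\mathcal{X}}$ with $\tilde f_i(x_i,x_{-i})\le\tilde f_i(y_i,x_{-i})$ for all $i\in N$ and all $y_i\in\tilde{\mathcal{X}}_i$. *)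

theory Defs
  imports "HOL-Analysis.Analysis"
begin

definition lsc_on :: "'a::topological_space set \<Rightarrow> ('a \<Rightarrow> real) \<Rightarrow> bool" where
  "lsc_on S f \<longleftrightarrow> (\<forall>x\<in>S. \<forall>t. t < f x \<longrightarrow> (\<forall>\<^sub>F z in at x within S. t < f z))"

text \<open>Players are 0..n-1. Action profiles are functions nat => real^'d (only i<n matter).
  Cost of the nonconvex game: f_i(z, x_{-i}) = theta_i(z, (1/n) sum_j A_j x_j) with x_i := z.\<close>
definition game_cost ::
  "nat \<Rightarrow> (nat \<Rightarrow> real^'d \<Rightarrow> real^'q \<Rightarrow> real) \<Rightarrow> (nat \<Rightarrow> real^'d^'q)
     \<Rightarrow> nat \<Rightarrow> real^'d \<Rightarrow> (nat \<Rightarrow> real^'d) \<Rightarrow> real" where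
  "game_cost n \<theta> A i z x = \<theta> i z ((1 / real n) *\<^sub>R (\<Sum>j<n. A j *v (x(i := z)) j))"

definition convexified_cost ::
  "nat \<Rightarrow> (nat \<Rightarrow> (real^'d) set) \<Rightarrow> (nat \<Rightarrow> real^'d \<Rightarrow> real^'q \<Rightarrow> real) \<Rightarrow> (nat \<Rightarrow> real^'d^'q)
     \<Rightarrow> nat \<Rightarrow> real^'d \<Rightarrow> (nat \<Rightarrow> real^'d) \<Rightarrow> real" where
  "convexified_cost n X \<theta> A i xi x =
     Inf {(\<Sum>k<CARD('d) + 1. \<alpha> k * game_cost n \<theta> A i (z k) x) | \<alpha> z.
            (\<forall>k<CARD('d) + 1. 0 \<le> \<alpha> k \<and> z k \<in> X i) \<and>
            (\<Sum>k<CARD('d) + 1. \<alpha> k) = 1 \<and>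
            xi = (\<Sum>k<CARD('d) + 1. \<alpha> k *\<^sub>R z k)}"

definition pure_NE_convexified ::
  "nat \<Rightarrow> (nat \<Rightarrow> (real^'d) set) \<Rightarrow> (nat \<Rightarrow> real^'d \<Rightarrow> real^'q \<Rightarrow> real) \<Rightarrow> (nat \<Rightarrow> real^'d^'q)
     \<Rightarrow> (nat \<Rightarrow> real^'d) \<Rightarrow> bool" where
  "pure_NE_convexified n X \<theta> A x \<longleftrightarrow>
     (\<forall>i<n. x i \<in> convex hull (X i)) \<and>
     (\<forall>i<n. \<forall>y\<in>convex hull (X i).
        convexified_cost n X \<theta> A i (x i) x \<le> convexified_cost n X \<theta> A i y (x(i := y)))"

end

theory Submission
  imports Defs "HOL-Homology.Homology"
begin

definition unit_ball_on :: "'i set \<Rightarrow> ('i \<Rightarrow> real) set" where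
  "unit_ball_on I = {u. (\<forall>i. i \<notin> I \<longrightarrow> u i = 0) \<and> (\<Sum>i\<in>I. (u i)\<^sup>2) \<le> 1}"

lemma topspace_nsphere_eq:
  "topspace (nsphere p) = {x. (\<forall>i. i \<notin> {..p} \<longrightarrow> x i = 0) \<and> (\<Sum>i\<le>p. (x i)\<^sup>2) = 1}"
  by (simp add: nsphere not_le conj_commute)

lemma sum_squares_scale:
  fixes t :: real
  shows "(\<Sum>i\<in>I. (t * u i)\<^sup>2) = t\<^sup>2 * (\<Sum>i\<in>I. (u i)\<^sup>2)"
  by (simp add: sum_distrib_left power_mult_distrib)

lemma continuous_map_normalize_nsphere:
  fixes v :: "'a \<Rightarrow> nat \<Rightarrow> real"
  assumes cont: "\<And>i. continuous_map X euclideanreal (\<lambda>z. v z i)"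
    and nonzero: "\<And>z. z \<in> topspace X \<Longrightarrow> \<exists>i\<le>p. v z i \<noteq> 0"
  shows "continuous_map X (nsphere p)
           (\<lambda>z i. if i < Suc p then v z i / sqrt (\<Sum>j\<le>p. (v z j)\<^sup>2) else 0)"
proof -
  have pos: "sqrt (\<Sum>j\<le>p. (v z j)\<^sup>2) > 0" if z: "z \<in> topspace X" for z
  proof -
    obtain i where "i \<le> p" "v z i \<noteq> 0"
      using nonzero[OF z] by blast
    then show ?thesis
      unfolding real_sqrt_gt_0_iff by (intro sum_pos2[of _ i]) auto
  qed
  have "continuous_map X euclideanreal (\<lambda>z. v z i / sqrt (\<Sum>j\<le>p. (v z j)\<^sup>2))" for i
    by (intro continuous_map_real_divide continuous_intros cont) (auto dest: pos)
  then have "continuous_map X (Euclidean_space (Suc p))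
               (\<lambda>z i. if i < Suc p then v z i / sqrt (\<Sum>j\<le>p. (v z j)\<^sup>2) else 0)"
    by (simp add: continuous_map_componentwise_Euclidean_space)
  moreover have "(\<Sum>i\<le>p. (v z i / sqrt (\<Sum>j\<le>p. (v z j)\<^sup>2))\<^sup>2) = 1" if "z \<in> topspace X" for z
    using pos[OF that] by (simp add: power_divide flip: sum_divide_distrib)
  ultimately show ?thesis
    by (auto simp: nsphere_def continuous_map_in_subtopology)
qed

text \<open>Without a fixed point, \<open>x \<mapsto> x - t g x\<close> followed by \<open>x \<mapsto> (1 - t) x - g ((1 - t) x)\<close>,
  normalised, would contract the sphere to a point.\<close>
lemma brouwer_unit_ball_atMost:
  fixes p :: nat
  assumes cont: "continuous_on (unit_ball_on {..p}) g"
    and into: "g \<in> unit_ball_on {..p} \<rightarrow> unit_ball_on {..p}"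
  shows "\<exists>u\<in>unit_ball_on {..p}. g u = u"
proof (rule ccontr)
  let ?B = "unit_ball_on {..p}"
  let ?S = "topspace (nsphere p)"
  let ?X = "prod_topology (top_of_set {0..1::real}) (nsphere p)"
  assume "\<not> ?thesis"
  have no_fix: "\<exists>i\<le>p. u i \<noteq> g u i" if u: "u \<in> ?B" for u
  proof (rule ccontr)
    assume "\<not> ?thesis"
    moreover have "u i = 0" "g u i = 0" if "i \<notin> {..p}" for i
      using u into that by (auto simp: unit_ball_on_def)
    ultimately have "g u = u"
      by (metis atMost_iff ext)
    then show False
      using \<open>\<not> (\<exists>u\<in>?B. g u = u)\<close> u by blast
  qed
  have sphere_ball: "x \<in> ?B" if "x \<in> ?S" for x
    using that by (simp add: topspace_nsphere_eq unit_ball_on_def)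
  have shrink_ball: "(\<lambda>i. (1 - t) * x i) \<in> ?B" if "t \<in> {0..1}" "x \<in> ?S" for t x
    using that by (simp add: topspace_nsphere_eq unit_ball_on_def sum_squares_scale power_le_one)
  have coord: "continuous_map ?X euclideanreal (\<lambda>z. snd z i)" for i
    using continuous_map_compose[OF continuous_map_snd continuous_map_nsphere_projection]
    by (simp add: o_def)
  have time: "continuous_map ?X euclideanreal fst"
    using continuous_map_compose[OF continuous_map_fst continuous_map_from_subtopology[OF continuous_map_id]]
    by (simp add: o_def)
  have g_comp: "continuous_map ?X euclideanreal (\<lambda>z. g (q z) i)"
    if cont_q: "\<And>i. continuous_map ?X euclideanreal (\<lambda>z. q z i)" and q_ball: "\<And>z. z \<in> topspace ?X \<Longrightarrow> q z \<in> ?B"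
    for q i
  proof -
    have "continuous_map ?X euclidean q"
      using cont_q by (simp add: continuous_map_componentwise_UNIV flip: euclidean_product_topology)
    then have "continuous_map ?X (top_of_set ?B) q"
      using q_ball by (simp add: continuous_map_in_subtopology image_subset_iff)
    moreover have "continuous_map (top_of_set ?B) euclideanreal (\<lambda>u. g u i)"
      using continuous_on_product_then_coordinatewise[OF cont] by simp
    ultimately have "continuous_map ?X euclideanreal ((\<lambda>u. g u i) \<circ> q)"
      by (rule continuous_map_compose)
    then show ?thesis
      by (simp add: o_def)
  qed
  define nz where "nz v = (\<lambda>i. if i < Suc p then v i / sqrt (\<Sum>j\<le>p. (v j)\<^sup>2) else 0)"
    for v :: "nat \<Rightarrow> real"
  define H1 where "H1 z = nz (\<lambda>i. snd z i - fst z * g (snd z) i)" for z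
  define H2 where "H2 z = nz (\<lambda>i. (1 - fst z) * snd z i - g (\<lambda>j. (1 - fst z) * snd z j) i)" for z
  have cont_H1: "continuous_map ?X (nsphere p) H1"
    unfolding H1_def nz_def
  proof (rule continuous_map_normalize_nsphere)
    show "continuous_map ?X euclideanreal (\<lambda>z. snd z i - fst z * g (snd z) i)" for i
      using sphere_ball by (intro continuous_intros coord time g_comp) auto
    fix z assume "z \<in> topspace ?X"
    then obtain t x where z: "z = (t, x)" "t \<in> {0..1}" "x \<in> ?S"
      by auto
    show "\<exists>i\<le>p. snd z i - fst z * g (snd z) i \<noteq> 0"
    proof (rule ccontr)
      assume "\<not> ?thesis"
      then have x_eq: "x i = t * g x i" if "i \<le> p" for i
        using that z by auto
      have "1 = (\<Sum>i\<le>p. (t * g x i)\<^sup>2)"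
        using z x_eq by (simp add: topspace_nsphere_eq)
      also have "\<dots> = t\<^sup>2 * (\<Sum>i\<le>p. (g x i)\<^sup>2)"
        by (rule sum_squares_scale)
      finally have "1 = t\<^sup>2 * (\<Sum>i\<le>p. (g x i)\<^sup>2)" .
      moreover have "(\<Sum>i\<le>p. (g x i)\<^sup>2) \<le> 1"
        using into sphere_ball[OF z(3)] by (auto simp: unit_ball_on_def)
      then have "t\<^sup>2 * (\<Sum>i\<le>p. (g x i)\<^sup>2) \<le> t\<^sup>2"
        by (simp add: mult_left_le)
      moreover have "t\<^sup>2 \<le> 1"
        using z by (simp add: power_le_one)
      ultimately have "t\<^sup>2 = 1"
        by linarith
      then have "t = 1"
        using z(2) by (simp add: power2_eq_1_iff)
      then show False
        using no_fix[OF sphere_ball[OF z(3)]] x_eq by auto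
    qed
  qed
  have cont_H2: "continuous_map ?X (nsphere p) H2"
    unfolding H2_def nz_def
  proof (rule continuous_map_normalize_nsphere)
    show "continuous_map ?X euclideanreal
            (\<lambda>z. (1 - fst z) * snd z i - g (\<lambda>j. (1 - fst z) * snd z j) i)" for i
      using shrink_ball by (intro continuous_intros coord time g_comp) auto
    fix z assume "z \<in> topspace ?X"
    then obtain t x where z: "z = (t, x)" "t \<in> {0..1}" "x \<in> ?S"
      by auto
    show "\<exists>i\<le>p. (1 - fst z) * snd z i - g (\<lambda>j. (1 - fst z) * snd z j) i \<noteq> 0"
      using no_fix[OF shrink_ball[OF z(2,3)]] z(1) by simp
  qed
  have "nz x = x" if "x \<in> ?S" for x
    using that by (auto simp: nz_def topspace_nsphere_eq fun_eq_iff)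
  then have "homotopic_with (\<lambda>x. True) (nsphere p) (nsphere p) id (\<lambda>x. H1 (1, x))"
    unfolding homotopic_with[OF refl] using cont_H1 by (intro exI[of _ H1]) (auto simp: H1_def)
  moreover have "homotopic_with (\<lambda>x. True) (nsphere p) (nsphere p) (\<lambda>x. H1 (1, x)) (\<lambda>x. H2 (1, x))"
    unfolding homotopic_with[OF refl] using cont_H2 by (intro exI[of _ H2]) (auto simp: H1_def H2_def)
  ultimately have "homotopic_with (\<lambda>x. True) (nsphere p) (nsphere p) id (\<lambda>x. H2 (1, x))"
    by (rule homotopic_with_trans)
  then have "homotopic_with (\<lambda>x. True) (nsphere p) (nsphere p) id (\<lambda>x. nz (\<lambda>i. - g (\<lambda>j. 0) i))"
    by (simp add: H2_def)
  then have "contractible_space (nsphere p)"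
    unfolding contractible_space_def by blast
  then show False
    using non_contractible_space_nsphere by blast
qed

lemma brouwer_unit_ball_on:
  fixes g :: "('i \<Rightarrow> real) \<Rightarrow> 'i \<Rightarrow> real"
  assumes "finite I" "I \<noteq> {}"
    and cont: "continuous_on (unit_ball_on I) g" and into: "g \<in> unit_ball_on I \<rightarrow> unit_ball_on I"
  shows "\<exists>u\<in>unit_ball_on I. g u = u"
proof -
  obtain p where "card I = Suc p"
    using assms by (cases "card I") auto
  then obtain h where h: "bij_betw h {..p} I"
    using ex_bij_betw_nat_finite[OF \<open>finite I\<close>] by (metis atLeast0LessThan lessThan_Suc_atMost)
  define enc where "enc u = (\<lambda>k. if k \<le> p then u (h k) else 0)" for u :: "'i \<Rightarrow> real"
  define dec where "dec v = (\<lambda>i. if i \<in> I then v (inv_into {..p} h i) else 0)" for v :: "nat \<Rightarrow> real"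
  have coordinate: "continuous_on S (\<lambda>x. if P then x j else 0)" for S P and j :: 'j
    by (cases P) (auto intro: continuous_on_subset[OF continuous_on_product_coordinates])
  have h_inv: "bij_betw (inv_into {..p} h) I {..p}"
    using h by (rule bij_betw_inv_into)
  obtain u where "u \<in> unit_ball_on I" "g u = u"
  proof (rule invertible_fixpoint_property[where S = "unit_ball_on {..p}" and i = enc and r = dec])
    show "continuous_on (unit_ball_on I) enc"
      unfolding enc_def by (intro continuous_on_coordinatewise_then_product coordinate)
    show "continuous_on (unit_ball_on {..p}) dec"
      unfolding dec_def by (intro continuous_on_coordinatewise_then_product coordinate)
    show "enc \<in> unit_ball_on I \<rightarrow> unit_ball_on {..p}"
    proof
      fix u assume "u \<in> unit_ball_on I"
      moreover have "(\<Sum>k\<le>p. (u (h k))\<^sup>2) = (\<Sum>i\<in>I. (u i)\<^sup>2)"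
        by (rule sum.reindex_bij_betw[OF h])
      ultimately show "enc u \<in> unit_ball_on {..p}"
        by (simp add: unit_ball_on_def enc_def)
    qed
    show "dec \<in> unit_ball_on {..p} \<rightarrow> unit_ball_on I"
    proof
      fix v assume "v \<in> unit_ball_on {..p}"
      moreover have "(\<Sum>i\<in>I. (v (inv_into {..p} h i))\<^sup>2) = (\<Sum>k\<le>p. (v k)\<^sup>2)"
        by (rule sum.reindex_bij_betw[OF h_inv])
      ultimately show "dec v \<in> unit_ball_on I"
        by (simp add: unit_ball_on_def dec_def)
    qed
    show "dec (enc u) = u" if u: "u \<in> unit_ball_on I" for u
    proof
      fix i
      show "dec (enc u) i = u i"
      proof (cases "i \<in> I")
        case True
        then have "inv_into {..p} h i \<le> p" "h (inv_into {..p} h i) = i"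
          using bij_betwE[OF h_inv] f_inv_into_f[of i h] bij_betw_imp_surj_on[OF h] by auto
        with True show ?thesis
          by (simp add: enc_def dec_def)
      qed (use u in \<open>simp add: dec_def unit_ball_on_def\<close>)
    qed
    show "\<exists>v\<in>unit_ball_on {..p}. f v = v"
      if "continuous_on (unit_ball_on {..p}) f" "f \<in> unit_ball_on {..p} \<rightarrow> unit_ball_on {..p}" for f
      using brouwer_unit_ball_atMost that by blast
  qed (use cont into in auto)
  then show ?thesis
    by blast
qed

lemma sum_Basis_inner_squares:
  fixes x :: "'a::euclidean_space"
  shows "(\<Sum>b\<in>Basis. (x \<bullet> b)\<^sup>2) = (norm x)\<^sup>2"
  unfolding power2_norm_eq_inner euclidean_inner[of x x] by (simp add: power2_eq_square)

text \<open>Coordinates with respect to \<open>Basis\<close>, scaled by the bound \<open>R\<close>, embed \<open>Pi\<^sub>E I K\<close> into a unit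
  ball; closest-point projections onto the factors give back a retraction.\<close>
lemma brouwer_PiE:
  fixes K :: "'i \<Rightarrow> 'a::euclidean_space set"
  assumes "finite I"
    and compact: "\<And>i. i \<in> I \<Longrightarrow> compact (K i)"
    and convex: "\<And>i. i \<in> I \<Longrightarrow> convex (K i)"
    and nonempty: "\<And>i. i \<in> I \<Longrightarrow> K i \<noteq> {}"
    and cont: "continuous_on (Pi\<^sub>E I K) f" and into: "f \<in> Pi\<^sub>E I K \<rightarrow> Pi\<^sub>E I K"
  shows "\<exists>x\<in>Pi\<^sub>E I K. f x = x"
proof (cases "I = {}")
  case True
  then show ?thesis
    using into by auto
next
  case False
  have "bounded (\<Union>i\<in>I. K i)"
    using \<open>finite I\<close> compact by (auto intro: compact_imp_bounded)
  then obtain B where "B > 0" and B: "\<And>i y. i \<in> I \<Longrightarrow> y \<in> K i \<Longrightarrow> norm y \<le> B"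
    unfolding bounded_pos by auto
  have "card I > 0"
    using \<open>finite I\<close> False by (simp add: card_gt_0_iff)
  define R where "R = B * sqrt (card I)"
  have "R > 0"
    using \<open>B > 0\<close> \<open>card I > 0\<close> by (simp add: R_def)
  define J where "J = I \<times> (Basis :: 'a set)"
  define enc where "enc y = (\<lambda>j. if j \<in> J then (y (fst j) \<bullet> snd j) / R else 0)" for y :: "'i \<Rightarrow> 'a"
  define dec where "dec u = (\<lambda>i. if i \<in> I then closest_point (K i) (\<Sum>b\<in>Basis. (R * u (i, b)) *\<^sub>R b)
                                 else undefined)" for u :: "'i \<times> 'a \<Rightarrow> real"
  obtain x where "x \<in> Pi\<^sub>E I K" "f x = x"
  proof (rule invertible_fixpoint_property[where S = "unit_ball_on J" and i = enc and r = dec])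
    show "continuous_on (Pi\<^sub>E I K) enc"
    proof (intro continuous_on_coordinatewise_then_product)
      fix j
      show "continuous_on (Pi\<^sub>E I K) (\<lambda>y. enc y j)"
        using \<open>R > 0\<close> unfolding enc_def
        by (cases "j \<in> J") (auto intro!: continuous_intros continuous_on_subset[OF continuous_on_product_coordinates])
    qed
    show "continuous_on (unit_ball_on J) dec"
    proof (intro continuous_on_coordinatewise_then_product)
      fix i
      show "continuous_on (unit_ball_on J) (\<lambda>u. dec u i)"
      proof (cases "i \<in> I")
        case True
        have "continuous_on (unit_ball_on J) (\<lambda>u. \<Sum>b\<in>Basis. (R * u (i, b)) *\<^sub>R b)"
          by (intro continuous_intros continuous_on_subset[OF continuous_on_product_coordinates]) auto
        moreover have "continuous_on UNIV (closest_point (K i))"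
          using True compact convex nonempty by (intro continuous_on_closest_point compact_imp_closed)
        ultimately show ?thesis
          using True unfolding dec_def by (auto intro: continuous_on_compose2)
      qed (simp add: dec_def)
    qed
    show "enc \<in> Pi\<^sub>E I K \<rightarrow> unit_ball_on J"
    proof
      fix y assume y: "y \<in> Pi\<^sub>E I K"
      have "(\<Sum>j\<in>J. (enc y j)\<^sup>2) = (\<Sum>i\<in>I. (norm (y i))\<^sup>2) / R\<^sup>2"
        by (simp add: J_def enc_def sum.cartesian_product' sum_Basis_inner_squares power_divide
            flip: sum_divide_distrib)
      also have "\<dots> \<le> (\<Sum>i\<in>I. B\<^sup>2) / R\<^sup>2"
        using y B \<open>B > 0\<close> by (intro divide_right_mono sum_mono power_mono) auto
      also have "\<dots> = 1"
        using \<open>B > 0\<close> \<open>card I > 0\<close> by (simp add: R_def power_mult_distrib)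
      finally show "enc y \<in> unit_ball_on J"
        by (auto simp: unit_ball_on_def enc_def)
    qed
    show "dec \<in> unit_ball_on J \<rightarrow> Pi\<^sub>E I K"
      using compact nonempty by (auto simp: dec_def intro!: closest_point_in_set compact_imp_closed)
    show "dec (enc y) = y" if "y \<in> Pi\<^sub>E I K" for y
    proof
      fix i
      show "dec (enc y) i = y i"
      proof (cases "i \<in> I")
        case True
        then have "(\<Sum>b\<in>Basis. (R * enc y (i, b)) *\<^sub>R b) = y i"
          using \<open>R > 0\<close> by (simp add: enc_def J_def euclidean_representation)
        with True PiE_mem[OF that True] show ?thesis
          by (simp add: dec_def closest_point_self)
      qed (use that in \<open>simp add: dec_def PiE_iff extensional_def\<close>)
    qed
    show "\<exists>u\<in>unit_ball_on J. g u = u"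
      if "continuous_on (unit_ball_on J) g" "g \<in> unit_ball_on J \<rightarrow> unit_ball_on J" for g
      using brouwer_unit_ball_on[OF _ _ that] \<open>finite I\<close> False by (simp add: J_def)
  qed (use cont into in auto)
  then show ?thesis
    by blast
qed

lemma lsc_onD_sequentially:
  assumes "lsc_on S f" "\<And>m. s m \<in> S" "x \<in> S" "s \<longlonglongrightarrow> x" "t < f x"
  shows "\<forall>\<^sub>F m in sequentially. t < f (s m)"
proof -
  have "\<forall>\<^sub>F z in nhds x. z \<noteq> x \<longrightarrow> z \<in> S \<longrightarrow> t < f z"
    using assms(1,3,5) unfolding lsc_on_def eventually_at_filter by blast
  then have "\<forall>\<^sub>F m in sequentially. s m \<noteq> x \<longrightarrow> s m \<in> S \<longrightarrow> t < f (s m)"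
    using assms(4) filterlim_iff by fastforce
  then show ?thesis
    by eventually_elim (use assms(2,5) in auto)
qed

lemma lsc_onI_sequentially:
  fixes S :: "'a::first_countable_topology set"
  assumes "\<And>s x t. (\<And>m. s m \<in> S) \<Longrightarrow> x \<in> S \<Longrightarrow> s \<longlonglongrightarrow> x \<Longrightarrow> t < f x \<Longrightarrow>
             \<forall>\<^sub>F m in sequentially. t < f (s m)"
  shows "lsc_on S f"
  unfolding lsc_on_def using assms by (blast intro: sequentially_imp_eventually_within)

text \<open>Cover \<open>S\<close> by neighbourhoods on which \<open>f\<close> exceeds a smaller value of \<open>f\<close>; the smallest of
  finitely many such values would have to exceed another one.\<close>
lemma lsc_on_attains_min:
  assumes "compact S" "S \<noteq> {}" and lsc: "lsc_on S f"
  shows "\<exists>x\<in>S. \<forall>y\<in>S. f x \<le> f y"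
proof (rule ccontr)
  assume "\<not> ?thesis"
  then have "\<forall>x\<in>S. \<exists>y\<in>S. f y < f x"
    by (auto simp: not_le)
  then obtain y where y: "\<And>x. x \<in> S \<Longrightarrow> y x \<in> S \<and> f (y x) < f x"
    using bchoice[of S "\<lambda>x y. y \<in> S \<and> f y < f x"] by blast
  have nbhd: "\<forall>x\<in>S. \<exists>U. open U \<and> x \<in> U \<and> (\<forall>z\<in>U \<inter> S. f (y x) < f z)"
  proof
    fix x assume "x \<in> S"
    have "\<forall>\<^sub>F z in at x within S. f (y x) < f z"
      using lsc y \<open>x \<in> S\<close> unfolding lsc_on_def by blast
    then obtain U where "open U" "x \<in> U" "\<forall>z\<in>U. z \<noteq> x \<longrightarrow> z \<in> S \<longrightarrow> f (y x) < f z"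
      unfolding eventually_at_topological by blast
    moreover have "f (y x) < f x"
      using y \<open>x \<in> S\<close> by blast
    ultimately show "\<exists>U. open U \<and> x \<in> U \<and> (\<forall>z\<in>U \<inter> S. f (y x) < f z)"
      by (intro exI[of _ U]) auto
  qed
  from bchoice[OF nbhd] obtain U
    where U: "\<forall>x\<in>S. open (U x) \<and> x \<in> U x \<and> (\<forall>z\<in>U x \<inter> S. f (y x) < f z)" ..
  have "\<And>x. x \<in> S \<Longrightarrow> open (U x)" and "S \<subseteq> (\<Union>x\<in>S. U x)"
    using U by auto
  then obtain C where C: "C \<subseteq> S" "finite C" "S \<subseteq> (\<Union>x\<in>C. U x)"
    by (rule compactE_image[OF \<open>compact S\<close>])
  then have "C \<noteq> {}"
    using \<open>S \<noteq> {}\<close> by blast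
  define x0 where "x0 = arg_min_on (\<lambda>x. f (y x)) C"
  have "x0 \<in> C" and x0_min: "\<And>x. x \<in> C \<Longrightarrow> \<not> f (y x) < f (y x0)"
    using arg_min_if_finite[OF \<open>finite C\<close> \<open>C \<noteq> {}\<close>, of "\<lambda>x. f (y x)"]
    unfolding x0_def by auto
  then have "y x0 \<in> S"
    using C y by blast
  then obtain x1 where "x1 \<in> C" "y x0 \<in> U x1"
    using C by blast
  then show False
    using U x0_min[of x1] \<open>y x0 \<in> S\<close> C by blast
qed

lemma lsc_on_add_continuous:
  assumes lsc: "lsc_on S f" and cont: "continuous_on S g"
  shows "lsc_on S (\<lambda>x. f x + g x)"
  unfolding lsc_on_def
proof (intro ballI allI impI)
  fix x t assume x: "x \<in> S" and t: "t < f x + g x"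
  define e where "e = f x + g x - t"
  have "\<forall>\<^sub>F z in at x within S. f x - e / 2 < f z"
    using lsc x t unfolding lsc_on_def e_def by simp
  moreover have "\<forall>\<^sub>F z in at x within S. g x - e / 2 < g z"
    using cont x t unfolding continuous_on_def e_def by (auto intro: order_tendstoD)
  ultimately show "\<forall>\<^sub>F z in at x within S. t < f z + g z"
    by eventually_elim (simp add: e_def field_simps)
qed

lemma lsc_on_compose_holder:
  fixes p :: "'a::topological_space \<Rightarrow> 'b::real_normed_vector"
  assumes lsc: "\<And>y. y \<in> \<Omega> \<Longrightarrow> lsc_on S (\<lambda>x. \<theta> x y)"
    and holder: "\<And>x y y'. x \<in> S \<Longrightarrow> y \<in> \<Omega> \<Longrightarrow> y' \<in> \<Omega> \<Longrightarrow>
                   \<bar>\<theta> x y' - \<theta> x y\<bar> \<le> H * norm (y' - y) powr \<gamma>"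
    and "\<gamma> > 0" and cont: "continuous_on S p" and p_into: "p ` S \<subseteq> \<Omega>"
  shows "lsc_on S (\<lambda>x. \<theta> x (p x))"
  unfolding lsc_on_def
proof (intro ballI allI impI)
  fix x t assume x: "x \<in> S" and t: "t < \<theta> x (p x)"
  define e where "e = \<theta> x (p x) - t"
  have "\<forall>\<^sub>F z in at x within S. \<theta> x (p x) - e / 2 < \<theta> z (p x)"
    using lsc[of "p x"] p_into x t unfolding lsc_on_def e_def by auto
  moreover have "((\<lambda>z. H * norm (p z - p x) powr \<gamma>) \<longlongrightarrow> H * 0) (at x within S)"
    using cont x \<open>\<gamma> > 0\<close> unfolding continuous_on_def
    by (intro tendsto_intros tendsto_zero_powrI) (auto simp: tendsto_norm_zero_iff LIM_zero_iff)
  then have "\<forall>\<^sub>F z in at x within S. H * norm (p z - p x) powr \<gamma> < e / 2"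
    using t by (intro order_tendstoD) (auto simp: e_def)
  moreover have "\<forall>\<^sub>F z in at x within S. z \<in> S"
    by (simp add: eventually_at_filter)
  ultimately show "\<forall>\<^sub>F z in at x within S. t < \<theta> z (p z)"
  proof eventually_elim
    case (elim z)
    then have "\<bar>\<theta> z (p z) - \<theta> z (p x)\<bar> \<le> H * norm (p z - p x) powr \<gamma>"
      using holder p_into x by blast
    with elim show ?case
      by (simp add: e_def abs_le_iff field_simps)
  qed
qed

lemma affine_dependent_indexed:
  fixes z :: "'i \<Rightarrow> 'a::euclidean_space"
  assumes "finite I" and "DIM('a) + 2 \<le> card I"
  obtains u where "sum u I = 0" "(\<Sum>i\<in>I. u i *\<^sub>R z i) = 0" "\<exists>i\<in>I. u i \<noteq> 0"
proof (cases "inj_on z I")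
  case True
  have "affine_dependent (z ` I)"
    using assms True by (intro affine_dependent_biggerset) (auto simp: card_image)
  then obtain U where U: "sum U (z ` I) = 0" "\<exists>v\<in>z ` I. U v \<noteq> 0" "(\<Sum>v\<in>z ` I. U v *\<^sub>R v) = 0"
    using affine_dependent_explicit_finite[of "z ` I"] \<open>finite I\<close> by auto
  show ?thesis
  proof (rule that[of "\<lambda>i. U (z i)"])
    show "(\<Sum>i\<in>I. U (z i)) = 0" "(\<Sum>i\<in>I. U (z i) *\<^sub>R z i) = 0"
      using U sum.reindex[OF True, of U] sum.reindex[OF True, of "\<lambda>v. U v *\<^sub>R v"] by simp_all
    show "\<exists>i\<in>I. U (z i) \<noteq> 0"
      using U by blast
  qed
next
  case False
  then obtain a b where ab: "a \<in> I" "b \<in> I" "a \<noteq> b" "z a = z b"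
    by (auto simp: inj_on_def)
  define u where "u i = (if i = a then 1 else if i = b then -1 else 0 :: real)" for i
  have "(\<Sum>i\<in>I. u i *\<^sub>R z i) = z a - z b"
    using ab \<open>finite I\<close> by (simp add: u_def if_distrib[of "\<lambda>c. c *\<^sub>R _"] sum.If_cases Int_absorb1)
  moreover have "sum u I = 0"
    using ab \<open>finite I\<close> by (simp add: u_def sum.If_cases Int_absorb1)
  moreover have "u a \<noteq> 0"
    by (simp add: u_def)
  ultimately show ?thesis
    using that[of u] ab(1,4) by (simp add: bexI[of _ a])
qed

text \<open>Shift the weights along an affine dependence, with the sign for which the cost does not
  increase, until the first weight vanishes.\<close>
lemma convex_combination_drop_point:
  fixes z :: "'i \<Rightarrow> 'a::euclidean_space" and c :: "'i \<Rightarrow> real"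
  assumes "finite I" "DIM('a) + 2 \<le> card I" "\<forall>i\<in>I. 0 \<le> \<alpha> i" "sum \<alpha> I = 1"
  obtains j \<beta> where "j \<in> I" "\<forall>i\<in>I - {j}. 0 \<le> \<beta> i" "sum \<beta> (I - {j}) = 1"
    "(\<Sum>i\<in>I - {j}. \<beta> i *\<^sub>R z i) = (\<Sum>i\<in>I. \<alpha> i *\<^sub>R z i)"
    "(\<Sum>i\<in>I - {j}. \<beta> i * c i) \<le> (\<Sum>i\<in>I. \<alpha> i * c i)"
proof -
  obtain u where u: "sum u I = 0" "(\<Sum>i\<in>I. u i *\<^sub>R z i) = 0" "\<exists>i\<in>I. u i \<noteq> 0"
    using affine_dependent_indexed[OF assms(1,2)] by blast
  define v where "v = (if (\<Sum>i\<in>I. u i * c i) \<ge> 0 then u else (\<lambda>i. - u i))"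
  have v: "sum v I = 0" "(\<Sum>i\<in>I. v i *\<^sub>R z i) = 0" "\<exists>i\<in>I. v i \<noteq> 0" "(\<Sum>i\<in>I. v i * c i) \<ge> 0"
    using u by (auto simp: v_def sum_negf)
  define P where "P = {i\<in>I. v i > 0}"
  have "finite P"
    using \<open>finite I\<close> by (simp add: P_def)
  have "P \<noteq> {}"
  proof
    assume "P = {}"
    then have "\<forall>i\<in>I. 0 \<le> - v i"
      by (auto simp: P_def not_less)
    moreover have "(\<Sum>i\<in>I. - v i) = 0"
      using v(1) by (simp add: sum_negf)
    ultimately show False
      using v(3) sum_nonneg_eq_0_iff[OF \<open>finite I\<close>, of "\<lambda>i. - v i"] by auto
  qed
  define j where "j = arg_min_on (\<lambda>i. \<alpha> i / v i) P"
  have "j \<in> P" and j_min: "\<And>i. i \<in> P \<Longrightarrow> \<alpha> j / v j \<le> \<alpha> i / v i"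
    using arg_min_if_finite[OF \<open>finite P\<close> \<open>P \<noteq> {}\<close>, of "\<lambda>i. \<alpha> i / v i"]
    unfolding j_def by (auto simp: not_less)
  then have "j \<in> I" "v j > 0"
    by (auto simp: P_def)
  define \<mu> where "\<mu> = \<alpha> j / v j"
  have "\<mu> \<ge> 0"
    using \<open>v j > 0\<close> assms(3) \<open>j \<in> I\<close> by (simp add: \<mu>_def)
  define \<beta> where "\<beta> i = \<alpha> i - \<mu> * v i" for i
  have "\<beta> j = 0"
    using \<open>v j > 0\<close> by (simp add: \<beta>_def \<mu>_def)
  have remove: "sum f I = f j + sum f (I - {j})" for f :: "'i \<Rightarrow> 'b::comm_monoid_add"
    using sum.remove[OF \<open>finite I\<close> \<open>j \<in> I\<close>] .
  show ?thesis
  proof (rule that[OF \<open>j \<in> I\<close>])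
    show "\<forall>i\<in>I - {j}. 0 \<le> \<beta> i"
    proof
      fix i assume i: "i \<in> I - {j}"
      show "0 \<le> \<beta> i"
      proof (cases "v i > 0")
        case True
        then have "\<mu> * v i \<le> \<alpha> i"
          using j_min[of i] i by (simp add: P_def \<mu>_def pos_le_divide_eq)
        then show ?thesis
          by (simp add: \<beta>_def)
      next
        case False
        then have "\<mu> * v i \<le> 0"
          using \<open>\<mu> \<ge> 0\<close> by (simp add: mult_nonneg_nonpos)
        moreover have "0 \<le> \<alpha> i"
          using assms(3) i by blast
        ultimately show ?thesis
          by (simp add: \<beta>_def)
      qed
    qed
    have "sum \<beta> I = sum \<alpha> I - \<mu> * sum v I"
      by (simp add: \<beta>_def sum_subtractf sum_distrib_left)
    then show "sum \<beta> (I - {j}) = 1"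
      using remove[of \<beta>] \<open>\<beta> j = 0\<close> v(1) assms(4) by simp
    have "(\<Sum>i\<in>I. \<beta> i *\<^sub>R z i) = (\<Sum>i\<in>I. \<alpha> i *\<^sub>R z i) - \<mu> *\<^sub>R (\<Sum>i\<in>I. v i *\<^sub>R z i)"
      by (simp add: \<beta>_def scaleR_diff_left sum_subtractf scaleR_sum_right)
    then show "(\<Sum>i\<in>I - {j}. \<beta> i *\<^sub>R z i) = (\<Sum>i\<in>I. \<alpha> i *\<^sub>R z i)"
      using remove[of "\<lambda>i. \<beta> i *\<^sub>R z i"] \<open>\<beta> j = 0\<close> v(2) by simp
    have "(\<Sum>i\<in>I. \<beta> i * c i) = (\<Sum>i\<in>I. \<alpha> i * c i) - \<mu> * (\<Sum>i\<in>I. v i * c i)"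
      by (simp add: \<beta>_def left_diff_distrib sum_subtractf sum_distrib_left mult.assoc)
    moreover have "\<mu> * (\<Sum>i\<in>I. v i * c i) \<ge> 0"
      using \<open>\<mu> \<ge> 0\<close> v(4) by simp
    ultimately show "(\<Sum>i\<in>I - {j}. \<beta> i * c i) \<le> (\<Sum>i\<in>I. \<alpha> i * c i)"
      using remove[of "\<lambda>i. \<beta> i * c i"] \<open>\<beta> j = 0\<close> by simp
  qed
qed

definition convex_reps :: "'a::euclidean_space set \<Rightarrow> 'a \<Rightarrow> ((nat \<Rightarrow> real) \<times> (nat \<Rightarrow> 'a)) set" where
  "convex_reps X y = {(a, z). (\<forall>k<DIM('a) + 1. 0 \<le> a k \<and> z k \<in> X) \<and> (\<Sum>k<DIM('a) + 1. a k) = 1 \<and>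
                             y = (\<Sum>k<DIM('a) + 1. a k *\<^sub>R z k)}"

definition weighted_cost :: "('a::euclidean_space \<Rightarrow> real) \<Rightarrow> (nat \<Rightarrow> real) \<times> (nat \<Rightarrow> 'a) \<Rightarrow> real" where
  "weighted_cost G r = (\<Sum>k<DIM('a) + 1. fst r k * G (snd r k))"

definition convex_envelope :: "'a::euclidean_space set \<Rightarrow> ('a \<Rightarrow> real) \<Rightarrow> 'a \<Rightarrow> real" where
  "convex_envelope X G y = Inf (weighted_cost G ` convex_reps X y)"

lemma convex_reps_of_small_combination:
  fixes z :: "'i \<Rightarrow> 'a::euclidean_space"
  assumes "finite I" "card I \<le> DIM('a) + 1" "\<forall>i\<in>I. 0 \<le> \<alpha> i \<and> z i \<in> X" "sum \<alpha> I = 1"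
  shows "\<exists>r\<in>convex_reps X (\<Sum>i\<in>I. \<alpha> i *\<^sub>R z i). weighted_cost G r = (\<Sum>i\<in>I. \<alpha> i * G (z i))"
proof -
  obtain h where h: "bij_betw h {..<card I} I"
    using ex_bij_betw_nat_finite[OF \<open>finite I\<close>] by (auto simp: atLeast0LessThan)
  obtain i0 where "i0 \<in> I"
    using assms(4) by force
  define a where "a k = (if k < card I then \<alpha> (h k) else 0)" for k
  define w where "w k = (if k < card I then z (h k) else z i0)" for k
  have h_in: "h k \<in> I" if "k < card I" for k
    using h that by (auto simp: bij_betw_def)
  have pad: "(\<Sum>k<DIM('a) + 1. if k < card I then f (h k) else 0) = sum f I" for f :: "'i \<Rightarrow> 'b::comm_monoid_add"
  proof -
    have "(\<Sum>k<DIM('a) + 1. if k < card I then f (h k) else 0) = (\<Sum>k<card I. f (h k))"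
      by (rule sum.mono_neutral_cong_right) (use assms(2) in auto)
    also have "\<dots> = sum f I"
      by (rule sum.reindex_bij_betw[OF h])
    finally show ?thesis .
  qed
  have "(a, w) \<in> convex_reps X (\<Sum>i\<in>I. \<alpha> i *\<^sub>R z i)"
    using assms(3,4) h_in \<open>i0 \<in> I\<close> pad[of \<alpha>] pad[of "\<lambda>i. \<alpha> i *\<^sub>R z i"]
    by (auto simp: convex_reps_def a_def w_def if_distrib[of "\<lambda>c. c *\<^sub>R _"] cong: if_cong)
  moreover have "weighted_cost G (a, w) = (\<Sum>i\<in>I. \<alpha> i * G (z i))"
    using pad[of "\<lambda>i. \<alpha> i * G (z i)"]
    by (simp add: weighted_cost_def a_def w_def if_distrib[of "\<lambda>c. c * _"] cong: if_cong)
  ultimately show ?thesis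
    by blast
qed

text \<open>Carath\'eodory's theorem, keeping track of the cost.\<close>
lemma convex_reps_weighted_cost_le:
  fixes z :: "'i \<Rightarrow> 'a::euclidean_space"
  assumes "finite I" "\<forall>i\<in>I. 0 \<le> \<alpha> i \<and> z i \<in> X" "sum \<alpha> I = 1"
  shows "\<exists>r\<in>convex_reps X (\<Sum>i\<in>I. \<alpha> i *\<^sub>R z i). weighted_cost G r \<le> (\<Sum>i\<in>I. \<alpha> i * G (z i))"
  using assms
proof (induction "card I" arbitrary: I \<alpha> rule: less_induct)
  case less
  show ?case
  proof (cases "card I \<le> DIM('a) + 1")
    case True
    then obtain r where "r \<in> convex_reps X (\<Sum>i\<in>I. \<alpha> i *\<^sub>R z i)"
      "weighted_cost G r = (\<Sum>i\<in>I. \<alpha> i * G (z i))"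
      using convex_reps_of_small_combination[OF less.prems(1) True less.prems(2,3)] by blast
    then show ?thesis
      by (intro bexI[of _ r]) auto
  next
    case False
    then have large: "DIM('a) + 2 \<le> card I"
      by simp
    have nonneg: "\<forall>i\<in>I. 0 \<le> \<alpha> i"
      using less.prems(2) by blast
    obtain j \<beta> where j: "j \<in> I" "\<forall>i\<in>I - {j}. 0 \<le> \<beta> i" "sum \<beta> (I - {j}) = 1"
      "(\<Sum>i\<in>I - {j}. \<beta> i *\<^sub>R z i) = (\<Sum>i\<in>I. \<alpha> i *\<^sub>R z i)"
      "(\<Sum>i\<in>I - {j}. \<beta> i * G (z i)) \<le> (\<Sum>i\<in>I. \<alpha> i * G (z i))"
      by (rule convex_combination_drop_point[OF less.prems(1) large nonneg less.prems(3)])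
    have "card (I - {j}) < card I"
      using card_Diff1_less[OF less.prems(1) j(1)] .
    from less.hyps[OF this] obtain r where
      "r \<in> convex_reps X (\<Sum>i\<in>I - {j}. \<beta> i *\<^sub>R z i)" "weighted_cost G r \<le> (\<Sum>i\<in>I - {j}. \<beta> i * G (z i))"
      using less.prems j(2,3) by blast
    with j(4,5) show ?thesis
      by force
  qed
qed

lemma convex_reps_nonempty:
  assumes "y \<in> convex hull X"
  shows "convex_reps X y \<noteq> {}"
proof -
  obtain S u where S: "finite S" "S \<subseteq> X" "\<forall>x\<in>S. 0 \<le> u x" "sum u S = 1" "(\<Sum>v\<in>S. u v *\<^sub>R v) = y"
    using assms unfolding convex_hull_explicit by blast
  then have "\<forall>x\<in>S. 0 \<le> u x \<and> id x \<in> X"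
    by auto
  from convex_reps_weighted_cost_le[OF S(1) this S(4)] show ?thesis
    using S(5) by auto
qed

lemma weighted_cost_ge:
  assumes "r \<in> convex_reps X y" and "\<And>x. x \<in> X \<Longrightarrow> L \<le> G x"
  shows "L \<le> weighted_cost G r"
proof -
  obtain a z where r: "r = (a, z)"
    by (cases r)
  then have "L = (\<Sum>k<DIM('a) + 1. a k * L)"
    using assms(1) by (simp add: convex_reps_def flip: sum_distrib_right)
  also have "\<dots> \<le> (\<Sum>k<DIM('a) + 1. a k * G (z k))"
    using assms r by (intro sum_mono mult_left_mono) (auto simp: convex_reps_def)
  finally show ?thesis
    by (simp add: weighted_cost_def r)
qed

lemma weighted_cost_le_add:
  assumes "r \<in> convex_reps X y" and "\<And>x. x \<in> X \<Longrightarrow> G1 x \<le> G2 x + e"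
  shows "weighted_cost G1 r \<le> weighted_cost G2 r + e"
proof -
  obtain a z where r: "r = (a, z)"
    by (cases r)
  have "(\<Sum>k<DIM('a) + 1. a k * G1 (z k)) \<le> (\<Sum>k<DIM('a) + 1. a k * (G2 (z k) + e))"
    using assms r by (intro sum_mono mult_left_mono) (auto simp: convex_reps_def)
  also have "\<dots> = (\<Sum>k<DIM('a) + 1. a k * G2 (z k)) + (\<Sum>k<DIM('a) + 1. a k) * e"
    by (simp only: distrib_left sum.distrib sum_distrib_right)
  finally show ?thesis
    using assms(1) r by (simp add: weighted_cost_def convex_reps_def)
qed

lemma compact_simultaneous_subseq:
  fixes s :: "nat \<Rightarrow> nat \<Rightarrow> 'a::metric_space"
  assumes "compact C" and "\<And>m k. k < K \<Longrightarrow> s m k \<in> C"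
  shows "\<exists>\<sigma> l. strict_mono \<sigma> \<and> (\<forall>k<K. l k \<in> C \<and> (\<lambda>m. s (\<sigma> m) k) \<longlonglongrightarrow> l k)"
  using assms(2)
proof (induction K)
  case 0
  show ?case
    using strict_mono_id by blast
next
  case (Suc K)
  then obtain \<sigma> l where \<sigma>: "strict_mono \<sigma>" "\<forall>k<K. l k \<in> C \<and> (\<lambda>m. s (\<sigma> m) k) \<longlonglongrightarrow> l k"
    by (metis less_SucI)
  obtain lK \<tau> where \<tau>: "lK \<in> C" "strict_mono \<tau>" "((\<lambda>m. s (\<sigma> m) K) \<circ> \<tau>) \<longlonglongrightarrow> lK"
    using seq_compactE[OF compact_imp_seq_compact[OF \<open>compact C\<close>], of "\<lambda>m. s (\<sigma> m) K"] Suc.prems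
    by blast
  have "(\<lambda>m. s (\<sigma> (\<tau> m)) k) \<longlonglongrightarrow> (l(K := lK)) k" if "k < Suc K" for k
  proof (cases "k = K")
    case False
    then show ?thesis
      using LIMSEQ_subseq_LIMSEQ[OF conjunct2[OF \<sigma>(2)[rule_format]] \<tau>(2)] that by (simp add: o_def)
  qed (use \<tau>(3) in \<open>simp add: o_def\<close>)
  moreover have "(l(K := lK)) k \<in> C" if "k < Suc K" for k
    using \<sigma>(2) \<tau>(1) that by (auto simp: less_Suc_eq)
  ultimately show ?case
    using strict_mono_o[OF \<sigma>(1) \<tau>(2)] unfolding o_def by blast
qed

lemma convex_reps_convergent_subseq:
  fixes X :: "'a::euclidean_space set"
  assumes "compact X" and "ys \<longlonglongrightarrow> y" and rs: "\<And>m. rs m \<in> convex_reps X (ys m)"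
  obtains \<sigma> r where "strict_mono \<sigma>" "r \<in> convex_reps X y"
    "\<And>k. k < DIM('a) + 1 \<Longrightarrow> (\<lambda>m. fst (rs (\<sigma> m)) k) \<longlonglongrightarrow> fst r k"
    "\<And>k. k < DIM('a) + 1 \<Longrightarrow> (\<lambda>m. snd (rs (\<sigma> m)) k) \<longlonglongrightarrow> snd r k"
proof -
  let ?K = "DIM('a) + 1"
  have reps: "\<forall>k<?K. 0 \<le> fst (rs m) k \<and> snd (rs m) k \<in> X" "(\<Sum>k<?K. fst (rs m) k) = 1"
    "ys m = (\<Sum>k<?K. fst (rs m) k *\<^sub>R snd (rs m) k)" for m
    using rs[of m] by (auto simp: convex_reps_def split: prod.splits)
  have "fst (rs m) k \<le> 1" if "k < ?K" for m k
    using member_le_sum[of k "{..<?K}" "fst (rs m)"] reps[of m] that by auto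
  then have "(fst (rs m) k, snd (rs m) k) \<in> {0..1} \<times> X" if "k < ?K" for m k
    using reps that by auto
  then obtain \<sigma> l where \<sigma>: "strict_mono \<sigma>"
    and l: "\<forall>k<?K. l k \<in> {0..1} \<times> X \<and> (\<lambda>m. (fst (rs (\<sigma> m)) k, snd (rs (\<sigma> m)) k)) \<longlonglongrightarrow> l k"
    using compact_simultaneous_subseq[where C = "{0..1} \<times> X" and K = ?K
        and s = "\<lambda>m k. (fst (rs m) k, snd (rs m) k)"] compact_Times[OF compact_Icc \<open>compact X\<close>]
    by blast
  define r where "r = (\<lambda>k. fst (l k), \<lambda>k. snd (l k))"
  have fst_lim: "(\<lambda>m. fst (rs (\<sigma> m)) k) \<longlonglongrightarrow> fst r k" and snd_lim: "(\<lambda>m. snd (rs (\<sigma> m)) k) \<longlonglongrightarrow> snd r k"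
    if "k < ?K" for k
    using tendsto_fst[OF conjunct2[OF l[rule_format, OF that]]]
      tendsto_snd[OF conjunct2[OF l[rule_format, OF that]]] by (simp_all add: r_def)
  have "(\<lambda>m. \<Sum>k<?K. fst (rs (\<sigma> m)) k) \<longlonglongrightarrow> (\<Sum>k<?K. fst r k)"
    by (intro tendsto_sum fst_lim) simp
  then have "(\<Sum>k<?K. fst r k) = 1"
    using reps(2) by (simp add: LIMSEQ_const_iff)
  moreover have "(\<lambda>m. ys (\<sigma> m)) \<longlonglongrightarrow> (\<Sum>k<?K. fst r k *\<^sub>R snd r k)"
    unfolding reps(3) by (intro tendsto_sum tendsto_scaleR fst_lim snd_lim) simp_all
  then have "y = (\<Sum>k<?K. fst r k *\<^sub>R snd r k)"
    using LIMSEQ_unique LIMSEQ_subseq_LIMSEQ[OF \<open>ys \<longlonglongrightarrow> y\<close> \<sigma>] by (auto simp: o_def)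
  moreover have "\<forall>k<?K. 0 \<le> fst r k \<and> snd r k \<in> X"
    using l by (auto simp: r_def)
  ultimately have "r \<in> convex_reps X y"
    by (auto simp: convex_reps_def r_def)
  with \<sigma> fst_lim snd_lim show ?thesis
    using that by blast
qed

lemma weighted_cost_lsc:
  fixes X :: "'a::euclidean_space set"
  assumes G: "lsc_on X G" and rs: "\<And>m. rs m \<in> convex_reps X (ys m)" and r: "r \<in> convex_reps X y"
    and fst_lim: "\<And>k. k < DIM('a) + 1 \<Longrightarrow> (\<lambda>m. fst (rs m) k) \<longlonglongrightarrow> fst r k"
    and snd_lim: "\<And>k. k < DIM('a) + 1 \<Longrightarrow> (\<lambda>m. snd (rs m) k) \<longlonglongrightarrow> snd r k"
    and t: "t < weighted_cost G r"
  shows "\<forall>\<^sub>F m in sequentially. t < weighted_cost G (rs m)"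
proof -
  let ?K = "DIM('a) + 1"
  define e where "e = weighted_cost G r - t"
  have "e > 0"
    using t by (simp add: e_def)
  have lim: "(\<lambda>m. \<Sum>k<?K. fst (rs m) k * G (snd r k)) \<longlonglongrightarrow> weighted_cost G r"
    unfolding weighted_cost_def by (intro tendsto_sum tendsto_mult fst_lim tendsto_const) simp
  have rs_X: "snd (rs m) k \<in> X" and r_X: "snd r k \<in> X" if "k < ?K" for m k
    using rs[of m] r that by (auto simp: convex_reps_def split: prod.splits)
  have "\<forall>k\<in>{..<?K}. \<forall>\<^sub>F m in sequentially. G (snd r k) - e / 2 < G (snd (rs m) k)"
    using lsc_onD_sequentially[OF G rs_X r_X snd_lim] \<open>e > 0\<close> by simp
  then have "\<forall>\<^sub>F m in sequentially. \<forall>k\<in>{..<?K}. G (snd r k) - e / 2 < G (snd (rs m) k)"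
    by (rule eventually_ball_finite[OF finite_lessThan])
  moreover have "\<forall>\<^sub>F m in sequentially. weighted_cost G r - e / 2 < (\<Sum>k<?K. fst (rs m) k * G (snd r k))"
    using order_tendstoD(1)[OF lim, of "weighted_cost G r - e / 2"] \<open>e > 0\<close> by simp
  ultimately show ?thesis
  proof eventually_elim
    case (elim m)
    have reps: "\<forall>k<?K. 0 \<le> fst (rs m) k" "(\<Sum>k<?K. fst (rs m) k) = 1"
      using rs[of m] by (auto simp: convex_reps_def split: prod.splits)
    have "(\<Sum>k<?K. fst (rs m) k * (G (snd r k) - e / 2))
        = (\<Sum>k<?K. fst (rs m) k * G (snd r k)) - (\<Sum>k<?K. fst (rs m) k) * (e / 2)"
      by (simp only: right_diff_distrib sum_subtractf sum_distrib_right)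
    then have "(\<Sum>k<?K. fst (rs m) k * G (snd r k)) - e / 2 = (\<Sum>k<?K. fst (rs m) k * (G (snd r k) - e / 2))"
      using reps(2) by simp
    also have "\<dots> \<le> weighted_cost G (rs m)"
      unfolding weighted_cost_def using elim(1) reps(1) by (intro sum_mono mult_left_mono) (auto simp: less_imp_le)
    finally show ?case
      using elim(2) unfolding e_def by argo
  qed
qed

context
  fixes X :: "'a::euclidean_space set"
  assumes X_compact: "compact X" and X_nonempty: "X \<noteq> {}"
begin

lemma bdd_below_weighted_cost:
  assumes "lsc_on X G"
  shows "bdd_below (weighted_cost G ` convex_reps X y)"
proof -
  obtain x0 where "\<forall>x\<in>X. G x0 \<le> G x"
    using lsc_on_attains_min[OF X_compact X_nonempty assms] by blast
  then show ?thesis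
    unfolding bdd_below_def using weighted_cost_ge by blast
qed

lemma convex_envelope_le:
  assumes "lsc_on X G" and "r \<in> convex_reps X y"
  shows "convex_envelope X G y \<le> weighted_cost G r"
  unfolding convex_envelope_def
  by (rule cInf_lower[OF imageI[OF assms(2)] bdd_below_weighted_cost[OF assms(1)]])

lemma convex_envelope_attained:
  assumes G: "lsc_on X G" and y: "y \<in> convex hull X"
  obtains r where "r \<in> convex_reps X y" "weighted_cost G r = convex_envelope X G y"
proof -
  define c where "c = convex_envelope X G y"
  have "\<forall>m::nat. \<exists>r. r \<in> convex_reps X y \<and> weighted_cost G r < c + inverse (Suc m)"
  proof
    fix m :: nat
    have "Inf (weighted_cost G ` convex_reps X y) < c + inverse (Suc m)"
      by (simp add: c_def convex_envelope_def)
    then show "\<exists>r. r \<in> convex_reps X y \<and> weighted_cost G r < c + inverse (Suc m)"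
      using convex_reps_nonempty[OF y] bdd_below_weighted_cost[OF G] by (auto simp: cInf_less_iff)
  qed
  from choice[OF this] obtain rs
    where "\<forall>m. rs m \<in> convex_reps X y \<and> weighted_cost G (rs m) < c + inverse (Suc m)"
    by blast
  then have rs: "\<And>m. rs m \<in> convex_reps X y" "\<And>m. weighted_cost G (rs m) < c + inverse (Suc m)"
    by simp_all
  obtain \<sigma> r where \<sigma>: "strict_mono \<sigma>" and r: "r \<in> convex_reps X y"
    and lim: "\<And>k. k < DIM('a) + 1 \<Longrightarrow> (\<lambda>m. fst (rs (\<sigma> m)) k) \<longlonglongrightarrow> fst r k"
      "\<And>k. k < DIM('a) + 1 \<Longrightarrow> (\<lambda>m. snd (rs (\<sigma> m)) k) \<longlonglongrightarrow> snd r k"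
    using convex_reps_convergent_subseq[where rs = rs, OF X_compact tendsto_const rs(1)] by blast
  have "weighted_cost G r \<le> c"
  proof (rule ccontr)
    assume gt: "\<not> ?thesis"
    then have "\<forall>\<^sub>F m in sequentially. c + (weighted_cost G r - c) / 2 < weighted_cost G (rs (\<sigma> m))"
      using rs(1) by (intro weighted_cost_lsc[OF G _ r lim]) (auto simp: field_simps)
    moreover have "(\<lambda>m. inverse (real (Suc (\<sigma> m)))) \<longlonglongrightarrow> 0"
      using LIMSEQ_subseq_LIMSEQ[OF LIMSEQ_inverse_real_of_nat \<sigma>] by (simp add: o_def)
    then have "\<forall>\<^sub>F m in sequentially. inverse (real (Suc (\<sigma> m))) < (weighted_cost G r - c) / 2"
      using gt by (intro order_tendstoD(2)) auto
    ultimately have "\<forall>\<^sub>F m in sequentially. False"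
      by eventually_elim (use rs(2) in \<open>smt (verit, best)\<close>)
    then show False
      by simp
  qed
  moreover have "c \<le> weighted_cost G r"
    unfolding c_def by (rule convex_envelope_le[OF G r])
  ultimately show ?thesis
    using that r by (auto simp: c_def)
qed

lemma lsc_on_convex_envelope:
  assumes G: "lsc_on X G"
  shows "lsc_on (convex hull X) (convex_envelope X G)"
proof (rule lsc_onI_sequentially)
  fix s z t
  assume s: "\<And>m. s m \<in> convex hull X" and "z \<in> convex hull X"
    and lim: "s \<longlonglongrightarrow> z" and t: "t < convex_envelope X G z"
  show "\<forall>\<^sub>F m in sequentially. t < convex_envelope X G (s m)"
  proof (rule ccontr)
    assume "\<not> ?thesis"
    from not_eventually_sequentiallyD[OF this]
    obtain \<sigma>0 :: "nat \<Rightarrow> nat"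
      where \<sigma>0: "strict_mono \<sigma>0" "\<And>m. \<not> t < convex_envelope X G (s (\<sigma>0 m))"
      by blast
    have "\<forall>m. \<exists>r. r \<in> convex_reps X (s (\<sigma>0 m)) \<and> weighted_cost G r = convex_envelope X G (s (\<sigma>0 m))"
      using convex_envelope_attained[OF G s] by metis
    from choice[OF this] obtain rs
      where "\<forall>m. rs m \<in> convex_reps X (s (\<sigma>0 m)) \<and> weighted_cost G (rs m) = convex_envelope X G (s (\<sigma>0 m))"
      by blast
    then have rs: "\<And>m. rs m \<in> convex_reps X (s (\<sigma>0 m))"
      "\<And>m. weighted_cost G (rs m) = convex_envelope X G (s (\<sigma>0 m))"
      by simp_all
    have "(\<lambda>m. s (\<sigma>0 m)) \<longlonglongrightarrow> z"
      using LIMSEQ_subseq_LIMSEQ[OF lim \<sigma>0(1)] by (simp add: o_def)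
    then obtain \<sigma> r where "strict_mono \<sigma>" and r: "r \<in> convex_reps X z"
      and lim: "\<And>k. k < DIM('a) + 1 \<Longrightarrow> (\<lambda>m. fst (rs (\<sigma> m)) k) \<longlonglongrightarrow> fst r k"
        "\<And>k. k < DIM('a) + 1 \<Longrightarrow> (\<lambda>m. snd (rs (\<sigma> m)) k) \<longlonglongrightarrow> snd r k"
      using convex_reps_convergent_subseq[where rs = rs, OF X_compact _ rs(1)] by blast
    have "t < weighted_cost G r"
      using t convex_envelope_le[OF G r] by linarith
    then have "\<forall>\<^sub>F m in sequentially. t < weighted_cost G (rs (\<sigma> m))"
      using rs(1) by (intro weighted_cost_lsc[OF G _ r lim]) auto
    then obtain m where "t < weighted_cost G (rs (\<sigma> m))"
      using eventually_sequentially by auto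
    then show False
      using rs(2) \<sigma>0(2) by metis
  qed
qed

lemma convex_on_convex_envelope:
  assumes G: "lsc_on X G"
  shows "convex_on (convex hull X) (convex_envelope X G)"
proof (rule convex_onI)
  fix \<mu> :: real and y1 y2 assume "\<mu> > 0" "\<mu> < 1" and y1: "y1 \<in> convex hull X" and y2: "y2 \<in> convex hull X"
  let ?K = "DIM('a) + 1"
  obtain a1 z1 where r1: "(a1, z1) \<in> convex_reps X y1" "weighted_cost G (a1, z1) = convex_envelope X G y1"
    using convex_envelope_attained[OF G y1] by (metis prod.exhaust)
  obtain a2 z2 where r2: "(a2, z2) \<in> convex_reps X y2" "weighted_cost G (a2, z2) = convex_envelope X G y2"
    using convex_envelope_attained[OF G y2] by (metis prod.exhaust)
  define I where "I = {..<?K} <+> {..<?K}"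
  define \<alpha> where "\<alpha> = case_sum (\<lambda>k. (1 - \<mu>) * a1 k) (\<lambda>k. \<mu> * a2 k)"
  define z where "z = case_sum z1 z2"
  have split: "sum f I = (\<Sum>k<?K. f (Inl k)) + (\<Sum>k<?K. f (Inr k))" for f :: "nat + nat \<Rightarrow> 'b::comm_monoid_add"
    unfolding I_def by (simp only: sum.Plus[OF finite_lessThan finite_lessThan] o_def)
  have "finite I"
    by (simp add: I_def)
  moreover have "\<forall>i\<in>I. 0 \<le> \<alpha> i \<and> z i \<in> X"
    using r1(1) r2(1) \<open>\<mu> > 0\<close> \<open>\<mu> < 1\<close> by (auto simp: I_def \<alpha>_def z_def convex_reps_def)
  moreover have "sum \<alpha> I = 1"
    using r1(1) r2(1) by (simp add: split \<alpha>_def convex_reps_def flip: sum_distrib_left)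
  ultimately obtain r where r: "r \<in> convex_reps X (\<Sum>i\<in>I. \<alpha> i *\<^sub>R z i)"
    "weighted_cost G r \<le> (\<Sum>i\<in>I. \<alpha> i * G (z i))"
    using convex_reps_weighted_cost_le by blast
  have "y1 = (\<Sum>k<?K. a1 k *\<^sub>R z1 k)" "y2 = (\<Sum>k<?K. a2 k *\<^sub>R z2 k)"
    using r1(1) r2(1) by (simp_all add: convex_reps_def)
  then have "(\<Sum>i\<in>I. \<alpha> i *\<^sub>R z i) = (1 - \<mu>) *\<^sub>R y1 + \<mu> *\<^sub>R y2"
    by (simp only: split \<alpha>_def z_def sum.case scaleR_sum_right scaleR_scaleR)
  moreover have "(\<Sum>i\<in>I. \<alpha> i * G (z i)) = (1 - \<mu>) * convex_envelope X G y1 + \<mu> * convex_envelope X G y2"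
    unfolding r1(2)[symmetric] r2(2)[symmetric]
    by (simp only: split \<alpha>_def z_def sum.case weighted_cost_def fst_conv snd_conv sum_distrib_left mult.assoc)
  ultimately show "convex_envelope X G ((1 - \<mu>) *\<^sub>R y1 + \<mu> *\<^sub>R y2)
      \<le> (1 - \<mu>) * convex_envelope X G y1 + \<mu> * convex_envelope X G y2"
    using convex_envelope_le[OF G r(1)] r(2) by simp
qed simp

lemma convex_envelope_le_add:
  assumes G1: "lsc_on X G1" and G2: "lsc_on X G2" and y: "y \<in> convex hull X"
    and e: "\<And>x. x \<in> X \<Longrightarrow> G1 x \<le> G2 x + e"
  shows "convex_envelope X G1 y \<le> convex_envelope X G2 y + e"
proof -
  obtain r where r: "r \<in> convex_reps X y" "weighted_cost G2 r = convex_envelope X G2 y"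
    using convex_envelope_attained[OF G2 y] by blast
  have "convex_envelope X G1 y \<le> weighted_cost G1 r"
    by (rule convex_envelope_le[OF G1 r(1)])
  also have "\<dots> \<le> weighted_cost G2 r + e"
    by (rule weighted_cost_le_add[OF r(1) e])
  finally show ?thesis
    using r(2) by simp
qed

end

lemma compact_tendsto_if_subseq_limits:
  fixes y :: "nat \<Rightarrow> 'a::metric_space"
  assumes "compact K" and "\<And>m. y m \<in> K"
    and limits: "\<And>\<sigma> l. strict_mono \<sigma> \<Longrightarrow> (\<lambda>m. y (\<sigma> m)) \<longlonglongrightarrow> l \<Longrightarrow> l = y0"
  shows "y \<longlonglongrightarrow> y0"
proof (rule ccontr)
  assume "\<not> y \<longlonglongrightarrow> y0"
  then obtain e where "e > 0" "\<not> (\<forall>\<^sub>F m in sequentially. dist (y m) y0 < e)"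
    unfolding tendsto_iff by blast
  from not_eventually_sequentiallyD[OF this(2)]
  obtain \<sigma> :: "nat \<Rightarrow> nat" where \<sigma>: "strict_mono \<sigma>" "\<And>m. \<not> dist (y (\<sigma> m)) y0 < e"
    by blast
  obtain l \<tau> where "strict_mono \<tau>" "((\<lambda>m. y (\<sigma> m)) \<circ> \<tau>) \<longlonglongrightarrow> l"
    using seq_compactE[OF compact_imp_seq_compact[OF \<open>compact K\<close>], of "\<lambda>m. y (\<sigma> m)"] assms(2)
    by blast
  moreover from this have "l = y0"
    using limits[OF strict_mono_o[OF \<sigma>(1)]] by (simp add: o_def)
  ultimately have "\<forall>\<^sub>F m in sequentially. dist (y (\<sigma> (\<tau> m))) y0 < e"
    using \<open>e > 0\<close> unfolding tendsto_iff by (simp add: o_def)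
  then show False
    using \<sigma>(2) by (simp add: eventually_sequentially)
qed

locale holder_family =
  fixes X :: "'a::euclidean_space set" and W :: "'w::real_normed_vector set"
    and G :: "'w \<Rightarrow> 'a \<Rightarrow> real" and H \<gamma> :: real
  assumes X_compact: "compact X" and X_nonempty: "X \<noteq> {}"
    and lsc: "\<And>w. w \<in> W \<Longrightarrow> lsc_on X (G w)"
    and holder: "\<And>w w' x. w \<in> W \<Longrightarrow> w' \<in> W \<Longrightarrow> x \<in> X \<Longrightarrow>
                   \<bar>G w' x - G w x\<bar> \<le> H * norm (w' - w) powr \<gamma>"
    and \<gamma>_pos: "\<gamma> > 0"
begin

definition prox_objective :: "'a \<Rightarrow> 'w \<Rightarrow> 'a \<Rightarrow> real" where
  "prox_objective v w y = convex_envelope X (G w) y + (norm (y - v))\<^sup>2"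

definition prox :: "'a \<Rightarrow> 'w \<Rightarrow> 'a" where
  "prox v w = (SOME y. y \<in> convex hull X \<and> (\<forall>y'\<in>convex hull X. prox_objective v w y \<le> prox_objective v w y'))"

lemma compact_convex_hull_X: "compact (convex hull X)"
  using X_compact by (rule compact_convex_hull)

lemma prox_minimizes:
  assumes "w \<in> W"
  shows "prox v w \<in> convex hull X" "\<And>y. y \<in> convex hull X \<Longrightarrow> prox_objective v w (prox v w) \<le> prox_objective v w y"
proof -
  have "lsc_on (convex hull X) (convex_envelope X (G w))"
    by (rule lsc_on_convex_envelope[OF X_compact X_nonempty lsc[OF assms]])
  moreover have "continuous_on (convex hull X) (\<lambda>y. (norm (y - v))\<^sup>2)"
    by (intro continuous_intros)
  ultimately have "lsc_on (convex hull X) (prox_objective v w)"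
    unfolding prox_objective_def[abs_def] by (rule lsc_on_add_continuous)
  then have ex: "\<exists>y\<in>convex hull X. \<forall>y'\<in>convex hull X. prox_objective v w y \<le> prox_objective v w y'"
    using lsc_on_attains_min[OF compact_convex_hull_X] X_nonempty by simp
  have "prox v w \<in> convex hull X \<and> (\<forall>y'\<in>convex hull X. prox_objective v w (prox v w) \<le> prox_objective v w y')"
    unfolding prox_def by (rule someI_ex) (use ex in blast)
  then show "prox v w \<in> convex hull X" "\<And>y. y \<in> convex hull X \<Longrightarrow> prox_objective v w (prox v w) \<le> prox_objective v w y"
    by auto
qed


text \<open>The objective is strictly convex: the envelope is convex and the squared distance is
  strictly convex.\<close>
lemma prox_objective_minimizer_unique:
  assumes w: "w \<in> W" and y1: "y1 \<in> convex hull X" and y2: "y2 \<in> convex hull X"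
    and min1: "\<forall>y\<in>convex hull X. prox_objective v w y1 \<le> prox_objective v w y"
    and min2: "\<forall>y\<in>convex hull X. prox_objective v w y2 \<le> prox_objective v w y"
  shows "y1 = y2"
proof (rule ccontr)
  assume "y1 \<noteq> y2"
  define mid where "mid = (1 - 1 / 2) *\<^sub>R y1 + (1 / 2) *\<^sub>R y2"
  have "mid \<in> convex hull X"
    unfolding mid_def by (rule convexD_alt[OF convex_convex_hull y1 y2]) auto
  have "convex_envelope X (G w) mid \<le> (convex_envelope X (G w) y1 + convex_envelope X (G w) y2) / 2"
    using convex_onD[OF convex_on_convex_envelope[OF X_compact X_nonempty lsc[OF w]], of "1 / 2" y1 y2] y1 y2
    by (simp add: mid_def)
  moreover have "(norm (mid - v))\<^sup>2 = ((norm (y1 - v))\<^sup>2 + (norm (y2 - v))\<^sup>2) / 2 - (norm (y1 - y2))\<^sup>2 / 4"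
    unfolding mid_def power2_norm_eq_inner
    by (simp add: inner_simps inner_commute algebra_simps) (simp add: field_simps)
  moreover have "(norm (y1 - y2))\<^sup>2 > 0"
    using \<open>y1 \<noteq> y2\<close> by simp
  ultimately have "prox_objective v w mid < (prox_objective v w y1 + prox_objective v w y2) / 2"
    unfolding prox_objective_def by argo
  moreover have "prox_objective v w y1 = prox_objective v w y2"
    using min1 min2 y1 y2 by (simp add: order_antisym)
  ultimately show False
    using min1 \<open>mid \<in> convex hull X\<close> by force
qed

text \<open>A point that is its own proximal point minimises the envelope: moving from it a step
  \<open>s\<close> towards a better point would decrease the envelope linearly in \<open>s\<close>, but increase the
  squared distance only quadratically.\<close>
lemma prox_eq_self_imp_minimal:
  assumes w: "w \<in> W" and v: "v \<in> convex hull X" and fixed: "prox v w = v" and y: "y \<in> convex hull X"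
  shows "convex_envelope X (G w) v \<le> convex_envelope X (G w) y"
proof (rule ccontr)
  let ?E = "convex_envelope X (G w)"
  assume "\<not> ?E v \<le> ?E y"
  define D where "D = ?E v - ?E y"
  define d where "d = (norm (y - v))\<^sup>2"
  have "D > 0" "d > 0"
    using \<open>\<not> ?E v \<le> ?E y\<close> by (auto simp: D_def d_def)
  define s where "s = min 1 (D / (2 * d))"
  have "0 < s" "s \<le> 1" "s * d \<le> D / 2"
    using \<open>D > 0\<close> \<open>d > 0\<close> by (auto simp: s_def min_def field_simps)
  define ys where "ys = (1 - s) *\<^sub>R v + s *\<^sub>R y"
  have "ys \<in> convex hull X"
    unfolding ys_def using \<open>0 < s\<close> \<open>s \<le> 1\<close> by (intro convexD_alt[OF convex_convex_hull v y]) auto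
  have "?E ys \<le> (1 - s) * ?E v + s * ?E y"
    unfolding ys_def using \<open>0 < s\<close> \<open>s \<le> 1\<close>
    by (intro convex_onD[OF convex_on_convex_envelope[OF X_compact X_nonempty lsc[OF w]] _ _ v y]) auto
  moreover have "ys - v = s *\<^sub>R (y - v)"
    by (simp add: ys_def algebra_simps)
  then have "(norm (ys - v))\<^sup>2 = s\<^sup>2 * d"
    by (simp add: d_def power_mult_distrib)
  moreover have "s\<^sup>2 * d \<le> s * (D / 2)"
    using \<open>s * d \<le> D / 2\<close> \<open>0 < s\<close> by (simp add: power2_eq_square mult.assoc mult_left_mono)
  moreover have "(1 - s) * ?E v + s * ?E y = ?E v - s * D"
    by (simp add: D_def algebra_simps)
  moreover have "s * D > 0"
    using \<open>0 < s\<close> \<open>D > 0\<close> by simp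
  ultimately have "prox_objective v w ys < prox_objective v w v"
    unfolding prox_objective_def by simp
  moreover have "prox_objective v w v \<le> prox_objective v w ys"
    using prox_minimizes(2)[OF w \<open>ys \<in> convex hull X\<close>, of v] fixed by simp
  ultimately show False
    by simp
qed

lemma convex_envelope_holder:
  assumes "w \<in> W" "w' \<in> W" "y \<in> convex hull X"
  shows "\<bar>convex_envelope X (G w') y - convex_envelope X (G w) y\<bar> \<le> H * norm (w' - w) powr \<gamma>"
proof -
  have "G w' x \<le> G w x + H * norm (w' - w) powr \<gamma>" "G w x \<le> G w' x + H * norm (w' - w) powr \<gamma>"
    if "x \<in> X" for x
    using holder[OF assms(1,2) that] unfolding abs_le_iff by linarith+
  then have "convex_envelope X (G w') y \<le> convex_envelope X (G w) y + H * norm (w' - w) powr \<gamma>"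
    and "convex_envelope X (G w) y \<le> convex_envelope X (G w') y + H * norm (w' - w) powr \<gamma>"
    using assms by (auto intro!: convex_envelope_le_add[OF X_compact X_nonempty lsc lsc])
  then show ?thesis
    by linarith
qed

lemma limit_of_prox_minimizes:
  assumes v: "vs \<longlonglongrightarrow> v" and w: "ws \<longlonglongrightarrow> w" "w \<in> W" and ws: "\<And>m. ws m \<in> W"
    and l: "(\<lambda>m. prox (vs m) (ws m)) \<longlonglongrightarrow> l"
  shows "l \<in> convex hull X" "\<And>y. y \<in> convex hull X \<Longrightarrow> prox_objective v w l \<le> prox_objective v w y"
proof -
  let ?E = "convex_envelope X (G w)"
  define ys where "ys m = prox (vs m) (ws m)" for m
  have ys: "ys m \<in> convex hull X" for m
    using prox_minimizes(1)[OF ws] by (simp add: ys_def)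
  show "l \<in> convex hull X"
    using closed_sequentially[OF compact_imp_closed[OF compact_convex_hull_X], of ys l] ys l
    unfolding ys_def[abs_def] by simp
  define \<omega> where "\<omega> m = H * norm (ws m - w) powr \<gamma>" for m
  have "\<omega> \<longlonglongrightarrow> H * 0"
    unfolding \<omega>_def using w(1) \<gamma>_pos
    by (intro tendsto_intros tendsto_zero_powrI) (auto simp: tendsto_norm_zero_iff LIM_zero_iff)
  fix y assume y: "y \<in> convex hull X"
  have bound: "?E (ys m) + (norm (ys m - vs m))\<^sup>2 \<le> ?E y + 2 * \<omega> m + (norm (y - vs m))\<^sup>2" for m
  proof -
    have "?E (ys m) \<le> convex_envelope X (G (ws m)) (ys m) + \<omega> m"
      using convex_envelope_holder[OF ws[of m] w(2) ys[of m]]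
      unfolding \<omega>_def abs_le_iff norm_minus_commute[of w] by linarith
    moreover have "convex_envelope X (G (ws m)) y \<le> ?E y + \<omega> m"
      using convex_envelope_holder[OF w(2) ws[of m] y] unfolding \<omega>_def abs_le_iff by linarith
    moreover have "prox_objective (vs m) (ws m) (ys m) \<le> prox_objective (vs m) (ws m) y"
      using prox_minimizes(2)[OF ws y] by (simp add: ys_def)
    ultimately show ?thesis
      unfolding prox_objective_def by linarith
  qed
  show "prox_objective v w l \<le> prox_objective v w y"
  proof (rule field_le_epsilon)
    fix \<delta> :: real assume "\<delta> > 0"
    have "\<forall>\<^sub>F m in sequentially. ?E l - \<delta> < ?E (ys m)"
      using lsc_onD_sequentially[OF lsc_on_convex_envelope[OF X_compact X_nonempty lsc[OF w(2)]] ys]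
        \<open>l \<in> convex hull X\<close> l \<open>\<delta> > 0\<close> by (simp add: ys_def)
    then have "\<forall>\<^sub>F m in sequentially. ?E l - \<delta> + (norm (ys m - vs m))\<^sup>2 \<le> ?E y + 2 * \<omega> m + (norm (y - vs m))\<^sup>2"
      by eventually_elim (use bound in smt)
    moreover have "(\<lambda>m. ?E l - \<delta> + (norm (ys m - vs m))\<^sup>2) \<longlonglongrightarrow> ?E l - \<delta> + (norm (l - v))\<^sup>2"
      using l v unfolding ys_def by (intro tendsto_intros)
    moreover have "(\<lambda>m. ?E y + 2 * \<omega> m + (norm (y - vs m))\<^sup>2) \<longlonglongrightarrow> ?E y + 2 * (H * 0) + (norm (y - v))\<^sup>2"
      using \<open>\<omega> \<longlonglongrightarrow> H * 0\<close> v by (intro tendsto_intros)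
    ultimately have "?E l - \<delta> + (norm (l - v))\<^sup>2 \<le> ?E y + (norm (y - v))\<^sup>2"
      using tendsto_le[OF trivial_limit_sequentially] by fastforce
    then show "prox_objective v w l \<le> prox_objective v w y + \<delta>"
      by (simp add: prox_objective_def)
  qed
qed

lemma continuous_on_prox: "continuous_on ((convex hull X) \<times> W) (\<lambda>p. prox (fst p) (snd p))"
  unfolding continuous_on_sequentially
proof (intro allI ballI impI, elim conjE)
  fix ps :: "nat \<Rightarrow> 'a \<times> 'w" and p
  assume p: "p \<in> (convex hull X) \<times> W" and ps: "\<forall>m. ps m \<in> (convex hull X) \<times> W" and lim: "ps \<longlonglongrightarrow> p"
  have "(\<lambda>m. prox (fst (ps m)) (snd (ps m))) \<longlonglongrightarrow> prox (fst p) (snd p)"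
  proof (rule compact_tendsto_if_subseq_limits[OF compact_convex_hull_X])
    show "prox (fst (ps m)) (snd (ps m)) \<in> convex hull X" for m
      using prox_minimizes(1) ps by (simp add: mem_Times_iff)
    fix \<sigma> l assume "strict_mono \<sigma>" and l: "(\<lambda>m. prox (fst (ps (\<sigma> m))) (snd (ps (\<sigma> m)))) \<longlonglongrightarrow> l"
    have "(\<lambda>m. ps (\<sigma> m)) \<longlonglongrightarrow> p"
      using LIMSEQ_subseq_LIMSEQ[OF lim \<open>strict_mono \<sigma>\<close>] by (simp add: o_def)
    then have "(\<lambda>m. fst (ps (\<sigma> m))) \<longlonglongrightarrow> fst p" "(\<lambda>m. snd (ps (\<sigma> m))) \<longlonglongrightarrow> snd p"
      by (auto intro: tendsto_fst tendsto_snd)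
    from limit_of_prox_minimizes[OF this _ _ l] p ps
    have "l \<in> convex hull X" "\<forall>y\<in>convex hull X. prox_objective (fst p) (snd p) l \<le> prox_objective (fst p) (snd p) y"
      by (auto simp: mem_Times_iff)
    then show "l = prox (fst p) (snd p)"
      using prox_objective_minimizer_unique prox_minimizes p by (auto simp: mem_Times_iff)
  qed
  then show "((\<lambda>p. prox (fst p) (snd p)) \<circ> ps) \<longlonglongrightarrow> prox (fst p) (snd p)"
    by (simp add: o_def)
qed

end

definition aggregate_others :: "nat \<Rightarrow> (nat \<Rightarrow> real^'d^'q) \<Rightarrow> nat \<Rightarrow> (nat \<Rightarrow> real^'d) \<Rightarrow> real^'q" where
  "aggregate_others n A i x = (1 / real n) *\<^sub>R (\<Sum>j\<in>{..<n} - {i}. A j *v x j)"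

definition player_cost ::
  "nat \<Rightarrow> (nat \<Rightarrow> real^'d \<Rightarrow> real^'q \<Rightarrow> real) \<Rightarrow> (nat \<Rightarrow> real^'d^'q) \<Rightarrow> nat \<Rightarrow> real^'q \<Rightarrow> real^'d \<Rightarrow> real"
  where "player_cost n \<theta> A i w z = \<theta> i z ((1 / real n) *\<^sub>R (A i *v z) + w)"

lemma aggregate_split:
  assumes "i < n"
  shows "(1 / real n) *\<^sub>R (\<Sum>j<n. A j *v (x(i := z)) j) = (1 / real n) *\<^sub>R (A i *v z) + aggregate_others n A i x"
proof -
  have "(\<Sum>j<n. A j *v (x(i := z)) j) = A i *v z + (\<Sum>j\<in>{..<n} - {i}. A j *v (x(i := z)) j)"
    using sum.remove[of "{..<n}" i "\<lambda>j. A j *v (x(i := z)) j"] assms by (simp add: fun_upd_same del: fun_upd_apply)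
  also have "(\<Sum>j\<in>{..<n} - {i}. A j *v (x(i := z)) j) = (\<Sum>j\<in>{..<n} - {i}. A j *v x j)"
    by (rule sum.cong) auto
  finally show ?thesis
    by (simp add: aggregate_others_def scaleR_add_right)
qed

lemma aggregate_others_update [simp]: "aggregate_others n A i (x(i := y)) = aggregate_others n A i x"
  unfolding aggregate_others_def by (intro arg_cong[where f = "\<lambda>s. _ *\<^sub>R s"] sum.cong) auto

lemma continuous_on_aggregate_others: "continuous_on S (aggregate_others n A i)"
  unfolding aggregate_others_def[abs_def]
  by (intro continuous_intros matrix_vector_mul_bounded_linear[THEN bounded_linear.continuous_on]
      continuous_on_product_coordinates[THEN continuous_on_subset]) auto

lemma convex_envelope_eq_Inf:
  fixes X :: "'a::euclidean_space set"
  shows "convex_envelope X G y = Inf {(\<Sum>k<DIM('a) + 1. \<alpha> k * G (z k)) | \<alpha> z.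
           (\<forall>k<DIM('a) + 1. 0 \<le> \<alpha> k \<and> z k \<in> X) \<and> (\<Sum>k<DIM('a) + 1. \<alpha> k) = 1 \<and>
           y = (\<Sum>k<DIM('a) + 1. \<alpha> k *\<^sub>R z k)}"
  unfolding convex_envelope_def weighted_cost_def convex_reps_def image_def
  by (rule arg_cong[where f = Inf])
     (simp only: Bex_def mem_Collect_eq case_prod_beta fst_conv snd_conv split_paired_Ex, blast)

lemma convexified_cost_eq_convex_envelope:
  assumes "i < n"
  shows "convexified_cost n X \<theta> A i y x = convex_envelope (X i) (player_cost n \<theta> A i (aggregate_others n A i x)) y"
proof -
  have "game_cost n \<theta> A i z x = player_cost n \<theta> A i (aggregate_others n A i x) z" for z
    by (simp only: game_cost_def player_cost_def aggregate_split[OF assms])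
  then show ?thesis
    by (simp only: convexified_cost_def convex_envelope_eq_Inf DIM_cart DIM_real mult_1_right)
qed


lemma (in holder_family) continuous_on_prox_compose:
  assumes "continuous_on S v" "continuous_on S w"
    and "\<And>s. s \<in> S \<Longrightarrow> v s \<in> convex hull X" "\<And>s. s \<in> S \<Longrightarrow> w s \<in> W"
  shows "continuous_on S (\<lambda>s. prox (v s) (w s))"
  using continuous_on_compose2[OF continuous_on_prox continuous_on_Pair[OF assms(1,2)]] assms(3,4)
  by auto

lemma holder_family_player_cost:
  fixes A :: "nat \<Rightarrow> real^'d^'q" and X :: "nat \<Rightarrow> (real^'d) set"
  assumes "compact (X i)" "X i \<noteq> {}" and lsc: "\<forall>y\<in>\<Omega>. lsc_on (X i) (\<lambda>z. \<theta> i z y)" and "\<gamma> > 0"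
    and holder: "\<forall>z\<in>X i. \<forall>y\<in>\<Omega>. \<forall>y'\<in>\<Omega>. \<bar>\<theta> i z y' - \<theta> i z y\<bar> \<le> H * norm (y' - y) powr \<gamma>"
  shows "holder_family (X i) {w. \<forall>z\<in>X i. (1 / real n) *\<^sub>R (A i *v z) + w \<in> \<Omega>} (player_cost n \<theta> A i) H \<gamma>"
proof
  fix w assume w: "w \<in> {w. \<forall>z\<in>X i. (1 / real n) *\<^sub>R (A i *v z) + w \<in> \<Omega>}"
  have "continuous_on (X i) ((*v) (A i))"
    by (rule linear_continuous_on[OF matrix_vector_mul_bounded_linear])
  then have cont: "continuous_on (X i) (\<lambda>z. (1 / real n) *\<^sub>R (A i *v z) + w)"
    by (intro continuous_on_add continuous_on_scaleR continuous_on_const)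
  show "lsc_on (X i) (player_cost n \<theta> A i w)"
    unfolding player_cost_def[abs_def]
  proof (rule lsc_on_compose_holder[where \<theta> = "\<theta> i" and \<Omega> = \<Omega>])
    show "lsc_on (X i) (\<lambda>z. \<theta> i z y)" if "y \<in> \<Omega>" for y
      using lsc that by blast
    show "\<bar>\<theta> i z y' - \<theta> i z y\<bar> \<le> H * norm (y' - y) powr \<gamma>" if "z \<in> X i" "y \<in> \<Omega>" "y' \<in> \<Omega>" for z y y'
      using holder that by blast
  qed (use cont w \<open>\<gamma> > 0\<close> in auto)
next
  fix w w' z
  assume "w \<in> {w. \<forall>z\<in>X i. (1 / real n) *\<^sub>R (A i *v z) + w \<in> \<Omega>}"
    and "w' \<in> {w. \<forall>z\<in>X i. (1 / real n) *\<^sub>R (A i *v z) + w \<in> \<Omega>}" and "z \<in> X i"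
  then have "\<bar>\<theta> i z ((1 / real n) *\<^sub>R (A i *v z) + w') - \<theta> i z ((1 / real n) *\<^sub>R (A i *v z) + w)\<bar>
      \<le> H * norm (((1 / real n) *\<^sub>R (A i *v z) + w') - ((1 / real n) *\<^sub>R (A i *v z) + w)) powr \<gamma>"
    using holder by blast
  then show "\<bar>player_cost n \<theta> A i w' z - player_cost n \<theta> A i w z\<bar> \<le> H * norm (w' - w) powr \<gamma>"
    by (simp add: player_cost_def)
qed (use assms in auto)

context
  fixes n :: nat and X :: "nat \<Rightarrow> (real^'d) set" and A :: "nat \<Rightarrow> real^'d^'q"
    and \<theta> :: "nat \<Rightarrow> real^'d \<Rightarrow> real^'q \<Rightarrow> real" and W :: "nat \<Rightarrow> (real^'q) set" and H \<gamma> :: real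
  assumes family: "\<And>i. i < n \<Longrightarrow> holder_family (X i) (W i) (player_cost n \<theta> A i) H \<gamma>"
    and aggregate_in_W: "\<And>i x. i < n \<Longrightarrow> \<forall>j<n. x j \<in> convex hull X j \<Longrightarrow> aggregate_others n A i x \<in> W i"
begin

text \<open>The fixed point comes from Brouwer's theorem applied to the map sending a profile to the
  players' proximal points.\<close>
lemma prox_fixpoint_exists:
  obtains x where "\<And>i. i < n \<Longrightarrow> x i \<in> convex hull X i"
    "\<And>i. i < n \<Longrightarrow> holder_family.prox (X i) (player_cost n \<theta> A i) (x i) (aggregate_others n A i x) = x i"
proof -
  define K where "K j = convex hull X j" for j
  define f where "f x = (\<lambda>j\<in>{..<n}. holder_family.prox (X j) (player_cost n \<theta> A j) (x j) (aggregate_others n A j x))"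
    for x
  have cont: "continuous_on (Pi\<^sub>E {..<n} K) f"
  proof (intro continuous_on_coordinatewise_then_product)
    fix j
    show "continuous_on (Pi\<^sub>E {..<n} K) (\<lambda>x. f x j)"
    proof (cases "j < n")
      case True
      show ?thesis
        unfolding f_def using True
        by (simp, intro holder_family.continuous_on_prox_compose[OF family] continuous_on_aggregate_others
            continuous_on_product_coordinates[THEN continuous_on_subset])
          (auto simp: K_def PiE_iff aggregate_in_W)
    qed (simp add: f_def)
  qed
  have into: "f \<in> Pi\<^sub>E {..<n} K \<rightarrow> Pi\<^sub>E {..<n} K"
    using holder_family.prox_minimizes(1)[OF family aggregate_in_W]
    by (auto simp: f_def K_def PiE_iff)
  have "\<exists>x\<in>Pi\<^sub>E {..<n} K. f x = x"
  proof (rule brouwer_PiE[OF finite_lessThan _ _ _ cont into])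
    show "compact (K j)" "convex (K j)" "K j \<noteq> {}" if "j \<in> {..<n}" for j
      using holder_family.X_compact[OF family] holder_family.X_nonempty[OF family] that
      by (auto simp: K_def compact_convex_hull)
  qed
  then obtain x where x: "x \<in> Pi\<^sub>E {..<n} K" and fx: "f x = x"
    by blast
  show ?thesis
  proof (rule that)
    show "x i \<in> convex hull X i" if "i < n" for i
      using PiE_mem[OF x, of i] that by (simp add: K_def)
    show "holder_family.prox (X i) (player_cost n \<theta> A i) (x i) (aggregate_others n A i x) = x i"
      if "i < n" for i
      using fun_cong[OF fx, of i] that by (simp add: f_def)
  qed
qed

lemma pure_NE_convexified_if_prox_fixpoint:
  assumes x: "\<And>i. i < n \<Longrightarrow> x i \<in> convex hull X i"
    and fixed: "\<And>i. i < n \<Longrightarrow> holder_family.prox (X i) (player_cost n \<theta> A i) (x i) (aggregate_others n A i x) = x i"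
  shows "pure_NE_convexified n X \<theta> A x"
  unfolding pure_NE_convexified_def
proof (intro conjI allI impI ballI)
  fix i y assume "i < n" and y: "y \<in> convex hull X i"
  show "convexified_cost n X \<theta> A i (x i) x \<le> convexified_cost n X \<theta> A i y (x(i := y))"
    unfolding convexified_cost_eq_convex_envelope[OF \<open>i < n\<close>] aggregate_others_update
    using holder_family.prox_eq_self_imp_minimal[OF family aggregate_in_W x fixed y] \<open>i < n\<close> x by blast
qed (use x in auto)

end

lemma aggregate_others_deviation_mem:
  fixes X :: "nat \<Rightarrow> (real^'d) set" and A :: "nat \<Rightarrow> real^'d^'q"
  assumes "i < n" "\<forall>j<n. x j \<in> convex hull X j" "z \<in> X i"
    and "{(1 / real n) *\<^sub>R (\<Sum>j<n. A j *v y j) | y. \<forall>j<n. y j \<in> convex hull X j} \<subseteq> \<Omega>"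
  shows "(1 / real n) *\<^sub>R (A i *v z) + aggregate_others n A i x \<in> \<Omega>"
proof -
  have "\<forall>j<n. (x(i := z)) j \<in> convex hull X j"
    using assms(2,3) hull_subset[of "X i"] by auto
  then have "(1 / real n) *\<^sub>R (\<Sum>j<n. A j *v (x(i := z)) j)
      \<in> {(1 / real n) *\<^sub>R (\<Sum>j<n. A j *v y j) | y. \<forall>j<n. y j \<in> convex hull X j}"
    by blast
  then show ?thesis
    unfolding aggregate_split[OF assms(1), symmetric] using assms(4) by blast
qed

theorem proposition1:
  fixes n :: nat
    and X :: "nat \<Rightarrow> (real^'d) set"
    and A :: "nat \<Rightarrow> real^'d^'q"
    and \<Omega> :: "(real^'q) set"
    and \<theta> :: "nat \<Rightarrow> real^'d \<Rightarrow> real^'q \<Rightarrow> real"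
  assumes X_ne: "\<forall>i<n. X i \<noteq> {}"
    and X_closed: "\<forall>i<n. closed (X i)"
    and X_bounded: "\<forall>i<n. bounded (X i)"
    and \<Omega>_nbhd: "\<exists>U. open U \<and> U \<subseteq> \<Omega> \<and>
          {(1 / real n) *\<^sub>R (\<Sum>j<n. A j *v y j) | y. \<forall>j<n. y j \<in> convex hull (X j)} \<subseteq> U"
    and lsc: "\<forall>i<n. \<forall>y\<in>\<Omega>. lsc_on (X i) (\<lambda>xi. \<theta> i xi y)"
    and holder: "\<exists>H \<gamma>. H > 0 \<and> \<gamma> > 0 \<and>
          (\<forall>i<n. \<forall>xi\<in>X i. \<forall>y\<in>\<Omega>. \<forall>y'\<in>\<Omega>.
             \<bar>\<theta> i xi y' - \<theta> i xi y\<bar> \<le> H * norm (y' - y) powr \<gamma>)"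
  shows "\<exists>x. pure_NE_convexified n X \<theta> A x"
proof -
  obtain H \<gamma> where "\<gamma> > 0" and H: "\<forall>i<n. \<forall>xi\<in>X i. \<forall>y\<in>\<Omega>. \<forall>y'\<in>\<Omega>.
      \<bar>\<theta> i xi y' - \<theta> i xi y\<bar> \<le> H * norm (y' - y) powr \<gamma>"
    using holder by blast
  have profiles: "{(1 / real n) *\<^sub>R (\<Sum>j<n. A j *v y j) | y. \<forall>j<n. y j \<in> convex hull X j} \<subseteq> \<Omega>"
    using \<Omega>_nbhd by blast
  define W where "W i = {w. \<forall>z\<in>X i. (1 / real n) *\<^sub>R (A i *v z) + w \<in> \<Omega>}" for i
  have family: "holder_family (X i) (W i) (player_cost n \<theta> A i) H \<gamma>" if "i < n" for i
    unfolding W_def using that X_ne X_closed X_bounded lsc \<open>\<gamma> > 0\<close> H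
    by (intro holder_family_player_cost) (auto simp: compact_eq_bounded_closed)
  have aggregate_in_W: "aggregate_others n A i x \<in> W i" if "i < n" "\<forall>j<n. x j \<in> convex hull X j" for i x
    using aggregate_others_deviation_mem[OF that _ profiles] by (simp add: W_def)
  obtain x where "\<And>i. i < n \<Longrightarrow> x i \<in> convex hull X i"
    "\<And>i. i < n \<Longrightarrow> holder_family.prox (X i) (player_cost n \<theta> A i) (x i) (aggregate_others n A i x) = x i"
    using prox_fixpoint_exists[OF family aggregate_in_W] by blast
  then show ?thesis
    using pure_NE_convexified_if_prox_fixpoint[OF family aggregate_in_W] by blast
qed

end
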